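(* Let $p(\cdot)\in\mathcal{P}^{\log}_{0}(\mathbb{R}^{3})$ with $2\leq p^{-}\leq p(\cdot)\leq p^{+}\leq 6$, and $1\leq\rho\leq\infty$. Then there exists a positive constant $C$ such that for any $f\in\mathcal{L}^{1}(0,\infty;F\dot{B}^{2-\frac{3}{p(\cdot)}}_{p(\cdot),1}(\mathbb{R}^{3}))\cap\mathcal{L}^{1}(0,\infty;F\dot{B}^{\frac{1}{2}}_{2,1}(\mathbb{R}^{3}))$, \[ \Big\|\int_{0}^{t}e^{(t-\tau)\Delta}\mathbb{P}f\,d\tau\Big\|_{\mathcal{X}_{t}}\leq C\Big(\|f\|_{\mathcal{L}^{1}_{t}(F\dot{B}^{2-\frac{3}{p(\cdot)}}_{p(\cdot),1})}+\|f\|_{\mathcal{L}^{1}_{t}(F\dot{B}^{\frac{1}{2}}_{2,1})}\Big). \]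
   Context: $e^{t\Delta}$ is the Fourier multiplier $e^{-t|\xi|^2}$; $\mathbb{P}$ is the Leray projector, the matrix Fourier multiplier with symbol $(\delta_{ij}-\xi_i\xi_j/|\xi|^2)_{i,j=1}^3$. Fourier transform: $\widehat f(\xi)=(2\pi)^{-3/2}\int f(x)e^{-ix\cdot\xi}dx$. Let $\chi$ be a smooth radial non-increasing function supported in $B(0,\frac43)$ with $\chi\equiv1$ on $B(0,\frac34)$; $\varphi(\xi)=\chi(\xi/2)-\chi(\xi)$, $\varphi_j(\xi)=\varphi(2^{-j}\xi)$, $S_jf=\mathcal{F}^{-1}(\chi(2^{-j}\cdot)\widehat f)$; $\mathcal{S}'_h$ is the set of tempered distributions with $S_jf\to0$ as $j\to-\infty$. Constant exponents: $\|f\|_{F\dot B^s_{p,1}}=\sum_j2^{js}\|\varphi_j\widehat f\|_{L^p}$ and $\|f\|_{\mathcal{L}^\lambda_t(F\dot B^s_{p,1})}=\sum_j2^{js}\|\varphi_j\widehat f\|_{L^\lambda(0,\infty;L^p_\xi)}$. Variable exponents: $\mathcal{P}_0$ is the set of measurable $p:\mathbb{R}^3\to[1,\infty)$ with $1<p^-:=\operatorname{ess\,inf}p$, $p^+:=\operatorname{ess\,sup}p<\infty$; $\|f\|_{L^{p(\cdot)}}=\inf\{\lambda>0:\int|f/\lambda|^{p(x)}dx\le1\}$; $\mathcal{P}_0^{\log}$ is the set of $p\in\mathcal{P}_0$ such that $1/p_\infty=\lim_{|x|\to\infty}1/p(x)$ exists and for some $C$, $|1/p(x)-1/p(y)|\le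 C/\log(e+1/|x-y|)$ and $|1/p(x)-1/p_\infty|\le C/\log(e+|x|)$. For a function $s(\cdot)$: $\|f\|_{F\dot B^{s(\cdot)}_{p(\cdot),1}}=\sum_j\|2^{js(\cdot)}\varphi_j\widehat f\|_{L^{p(\cdot)}}$ and $\|f\|_{\mathcal{L}^\rho_t(F\dot B^{s(\cdot)}_{p(\cdot),1})}=\sum_j\|2^{js(\cdot)}\varphi_j\widehat f\|_{L^\rho(0,\infty;L^{p(\cdot)}_\xi)}$, with $2^{js(\cdot)}$ the function $\xi\mapsto 2^{js(\xi)}$. The space $\mathcal{X}_t=\mathcal{L}^{\rho}(0,\infty;F\dot{B}^{2-\frac{3}{p(\cdot)}+\frac{2}{\rho}}_{p(\cdot),1})\cap\mathcal{L}^{1}(0,\infty;F\dot{B}^{\frac{5}{2}}_{2,1})\cap\mathcal{L}^{\infty}(0,\infty;F\dot{B}^{\frac{1}{2}}_{2,1})$ with norm $\|u\|_{\mathcal{X}_t}=\max\{\|u\|_{\mathcal{L}^\rho_t(F\dot B^{2-\frac{3}{p(\cdot)}+\frac2\rho}_{p(\cdot),1})},\|u\|_{\mathcal{L}^1_t(F\dot B^{\frac52}_{2,1})},\|u\|_{\mathcal{L}^\infty_t(F\dot B^{\frac12}_{2,1})}\}$. *)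

theory Defs
  imports "HOL-Analysis.Analysis" "HOL-Probability.Probability"
begin

fun Ck :: "nat \<Rightarrow> (real^3 \<Rightarrow> real) \<Rightarrow> bool" where
  "Ck 0 f = continuous_on UNIV f"
| "Ck (Suc k) f = ((\<forall>x. f differentiable (at x)) \<and>
                   (\<forall>v. Ck k (\<lambda>x. frechet_derivative f (at x) v)))"

definition smooth :: "(real^3 \<Rightarrow> real) \<Rightarrow> bool" where
  "smooth f \<longleftrightarrow> (\<forall>k. Ck k f)"

definition admissible_cutoff :: "(real^3 \<Rightarrow> real) \<Rightarrow> bool" where
  "admissible_cutoff chi \<longleftrightarrow> smooth chi
     \<and> (\<exists>h::real \<Rightarrow> real. antimono_on {0..} h \<and> (\<forall>\<xi>. chi \<xi> = h (norm \<xi>)))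
     \<and> (\<forall>\<xi>. norm \<xi> \<ge> 4/3 \<longrightarrow> chi \<xi> = 0)
     \<and> (\<forall>\<xi>. norm \<xi> \<le> 3/4 \<longrightarrow> chi \<xi> = 1)"

definition phi_j :: "(real^3 \<Rightarrow> real) \<Rightarrow> int \<Rightarrow> real^3 \<Rightarrow> real" where
  "phi_j chi j \<xi> = chi ((2 powr (- real_of_int j) / 2) *\<^sub>R \<xi>) - chi ((2 powr (- real_of_int j)) *\<^sub>R \<xi>)"

definition enn_powr :: "ennreal \<Rightarrow> real \<Rightarrow> ennreal" where
  "enn_powr x a = (if x = \<top> then \<top> else ennreal (enn2real x powr a))"

definition zsum :: "(int \<Rightarrow> ennreal) \<Rightarrow> ennreal" where
  "zsum a = (SUP n::nat. \<Sum>j\<in>{- int n..int n}. a j)"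

definition inv_exp :: "ennreal \<Rightarrow> real" where
  "inv_exp \<rho> = (if \<rho> = \<top> then 0 else 1 / enn2real \<rho>)"

definition Lp_norm :: "real \<Rightarrow> (real^3 \<Rightarrow> real) \<Rightarrow> ennreal" where
  "Lp_norm p F = enn_powr (\<integral>\<^sup>+ \<xi>. ennreal (\<bar>F \<xi>\<bar> powr p) \<partial>lborel) (1 / p)"

definition Lvar_norm :: "(real^3 \<Rightarrow> real) \<Rightarrow> (real^3 \<Rightarrow> real) \<Rightarrow> ennreal" where
  "Lvar_norm p F = Inf (ennreal ` {lam::real. lam > 0 \<and>
      (\<integral>\<^sup>+ \<xi>. ennreal (\<bar>F \<xi> / lam\<bar> powr p \<xi>) \<partial>lborel) \<le> 1})"

definition Lt_norm :: "ennreal \<Rightarrow> (real \<Rightarrow> ennreal) \<Rightarrow> ennreal" where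
  "Lt_norm lam N = (if lam = \<top> then esssup (restrict_space lborel {0<..}) N
     else enn_powr (\<integral>\<^sup>+ t\<in>{0<..}. enn_powr (N t) (enn2real lam) \<partial>lborel) (1 / enn2real lam))"

definition ess_sup_r :: "(real^3 \<Rightarrow> real) \<Rightarrow> ereal" where
  "ess_sup_r p = esssup lborel (\<lambda>x. ereal (p x))"

definition ess_inf_r :: "(real^3 \<Rightarrow> real) \<Rightarrow> ereal" where
  "ess_inf_r p = - esssup lborel (\<lambda>x. - ereal (p x))"

definition P0 :: "(real^3 \<Rightarrow> real) set" where
  "P0 = {p. p \<in> borel_measurable lborel \<and> (\<forall>x. 1 \<le> p x)
            \<and> 1 < ess_inf_r p \<and> ess_sup_r p < \<infinity>}"

definition P0_log :: "(real^3 \<Rightarrow> real) set" where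
  "P0_log = {p. p \<in> P0 \<and> (\<exists>p_inf C::real.
       ((\<lambda>x. 1 / p x) \<longlongrightarrow> 1 / p_inf) at_infinity
     \<and> (\<forall>x y. \<bar>1 / p x - 1 / p y\<bar> \<le> C / ln (exp 1 + 1 / dist x y))
     \<and> (\<forall>x. \<bar>1 / p x - 1 / p_inf\<bar> \<le> C / ln (exp 1 + norm x)))}"

definition leray :: "real^3 \<Rightarrow> complex^3 \<Rightarrow> complex^3" where
  "leray \<xi> v = (\<chi> i. v $ i - (\<Sum>j\<in>UNIV. complex_of_real (\<xi> $ i * \<xi> $ j / (norm \<xi>)\<^sup>2) * v $ j))"

text \<open>Fourier transform of the Duhamel term  int_0^t e^{(t-tau)Delta} P f(tau) dtau,
  given the (spatial) Fourier transform g of f\<close>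
definition duhamel_hat :: "(real \<Rightarrow> real^3 \<Rightarrow> complex^3) \<Rightarrow> real \<Rightarrow> real^3 \<Rightarrow> complex^3" where
  "duhamel_hat g t \<xi> = set_lebesgue_integral lborel {0..t}
      (\<lambda>\<tau>. exp (- (t - \<tau>) * (norm \<xi>)\<^sup>2) *\<^sub>R leray \<xi> (g \<tau> \<xi>))"

definition CL_norm :: "(real^3 \<Rightarrow> real) \<Rightarrow> ennreal \<Rightarrow> real \<Rightarrow> real \<Rightarrow>
     (real \<Rightarrow> real^3 \<Rightarrow> complex^3) \<Rightarrow> ennreal" where
  "CL_norm chi lam s p g = zsum (\<lambda>j. ennreal (2 powr (real_of_int j * s)) *
     Lt_norm lam (\<lambda>t. Lp_norm p (\<lambda>\<xi>. norm (phi_j chi j \<xi> *\<^sub>R g t \<xi>))))"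

definition CL_var_norm :: "(real^3 \<Rightarrow> real) \<Rightarrow> ennreal \<Rightarrow> (real^3 \<Rightarrow> real) \<Rightarrow> (real^3 \<Rightarrow> real) \<Rightarrow>
     (real \<Rightarrow> real^3 \<Rightarrow> complex^3) \<Rightarrow> ennreal" where
  "CL_var_norm chi lam s p g = zsum (\<lambda>j.
     Lt_norm lam (\<lambda>t. Lvar_norm p (\<lambda>\<xi>. 2 powr (real_of_int j * s \<xi>) * norm (phi_j chi j \<xi> *\<^sub>R g t \<xi>))))"

definition X_norm :: "(real^3 \<Rightarrow> real) \<Rightarrow> (real^3 \<Rightarrow> real) \<Rightarrow> ennreal \<Rightarrow>
     (real \<Rightarrow> real^3 \<Rightarrow> complex^3) \<Rightarrow> ennreal" where
  "X_norm chi p \<rho> u = max (CL_var_norm chi \<rho> (\<lambda>\<xi>. 2 - 3 / p \<xi> + 2 * inv_exp \<rho>) p u)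
      (max (CL_norm chi 1 (5/2) 2 u) (CL_norm chi \<top> (1/2) 2 u))"

end

(* On the Fourier side the Duhamel term is
     u(t, xi) = int_0^t exp (-(t - tau) |xi|^2) P(xi) f(tau, xi) dtau,
   and |xi| >= 3/4 2^j on the support of phi_j.  Hence, pointwise in xi,
     |phi_j u(t)| <= 12 int_0^t exp (-(t - tau) kappa_j) |phi_j f(tau)| dtau,   kappa_j = (3/4 2^j)^2,
   where 12 crudely bounds the Leray projector.  Minkowski's integral inequality for the Luxemburg
   norm (a consequence of Jensen's inequality for a probability density in time) moves the
   L^p(.) or L^2 norm in xi inside the tau-integral, and Young's inequality in time,
     || int_0^t exp (-(t - tau) kappa) a(tau) dtau ||_(L^r) <= (kappa r)^(-1/r) ||a||_(L^1),
   costs the factor (kappa_j r)^(-1/r) <= 16/9 2^(-2j/r), which absorbs the extra weight 2^(2j/r)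
   of the target norms.  Summing over j gives the estimate with C = 22. *)

theory Submission
  imports Defs
begin

section \<open>The Luxemburg norm and Minkowski's integral inequality\<close>

lemma powr_ge_tangent_line:
  fixes q m y :: real
  assumes "q \<ge> 1" "m \<ge> 0" "y \<ge> 0"
  shows "q * m powr (q - 1) * y \<le> y powr q + (q - 1) * m powr q"
proof (cases "q = 1")
  case True
  then show ?thesis using assms by (cases "m = 0") auto
next
  case False
  with assms have q: "q > 1" by simp
  define r where "r = q / (q - 1)"
  have r: "r > 1" "1 / q + 1 / r = 1" using q by (simp_all add: r_def field_simps)
  have "y * m powr (q - 1) \<le> y powr q / q + (m powr (q - 1)) powr r / r"
    by (rule Youngs_inequality) (use q r assms in auto)
  also have "(m powr (q - 1)) powr r = m powr q" using q by (simp add: powr_powr r_def)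
  finally have "q * (y * m powr (q - 1)) \<le> q * (y powr q / q + m powr q / r)"
    using q by (intro mult_left_mono) auto
  also have "\<dots> = y powr q + (q - 1) * m powr q" using q by (simp add: r_def field_simps)
  finally show ?thesis by (simp add: mult_ac)
qed

lemma nn_integral_tangent_line_le:
  fixes w y :: "'a \<Rightarrow> real"
  assumes q: "q \<ge> 1" and m: "m \<ge> 0"
    and [measurable]: "w \<in> borel_measurable M" "y \<in> borel_measurable M"
    and w0: "\<And>x. w x \<ge> 0" and y0: "\<And>x. y x \<ge> 0"
    and w1: "(\<integral>\<^sup>+ x. ennreal (w x) \<partial>M) = 1"
  shows "ennreal (q * m powr (q - 1)) * (\<integral>\<^sup>+ x. ennreal (w x * y x) \<partial>M)
    \<le> (\<integral>\<^sup>+ x. ennreal (w x * y x powr q) \<partial>M) + ennreal ((q - 1) * m powr q)"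
proof -
  have "ennreal (q * m powr (q - 1)) * (\<integral>\<^sup>+ x. ennreal (w x * y x) \<partial>M)
      = (\<integral>\<^sup>+ x. ennreal (q * m powr (q - 1) * (w x * y x)) \<partial>M)"
    using q m w0 y0 by (subst nn_integral_cmult[symmetric]) (auto simp: ennreal_mult)
  also have "\<dots> \<le> (\<integral>\<^sup>+ x. ennreal (w x * y x powr q) + ennreal ((q - 1) * m powr q) * ennreal (w x) \<partial>M)"
  proof (intro nn_integral_mono)
    fix x
    have "w x * (q * m powr (q - 1) * y x) \<le> w x * (y x powr q + (q - 1) * m powr q)"
      using powr_ge_tangent_line[OF q m y0] w0 by (intro mult_left_mono) auto
    then have "ennreal (q * m powr (q - 1) * (w x * y x))
        \<le> ennreal (w x * y x powr q + (q - 1) * m powr q * w x)"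
      by (intro ennreal_leI) (simp add: algebra_simps)
    also have "\<dots> = ennreal (w x * y x powr q) + ennreal ((q - 1) * m powr q) * ennreal (w x)"
      using q w0[of x] by (simp add: ennreal_plus ennreal_mult)
    finally show "ennreal (q * m powr (q - 1) * (w x * y x))
        \<le> ennreal (w x * y x powr q) + ennreal ((q - 1) * m powr q) * ennreal (w x)" .
  qed
  also have "\<dots> = (\<integral>\<^sup>+ x. ennreal (w x * y x powr q) \<partial>M) + ennreal ((q - 1) * m powr q)"
    by (subst nn_integral_add) (auto simp: nn_integral_cmult w1)
  finally show ?thesis .
qed

lemma jensen_nn_integral_powr:
  fixes w y :: "'a \<Rightarrow> real"
  assumes q: "q \<ge> 1"
    and wm: "w \<in> borel_measurable M" and ym: "y \<in> borel_measurable M"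
    and w0: "\<And>x. w x \<ge> 0" and y0: "\<And>x. y x \<ge> 0"
    and w1: "(\<integral>\<^sup>+ x. ennreal (w x) \<partial>M) = 1"
  shows "enn_powr (\<integral>\<^sup>+ x. ennreal (w x * y x) \<partial>M) q \<le> (\<integral>\<^sup>+ x. ennreal (w x * y x powr q) \<partial>M)"
proof (cases "(\<integral>\<^sup>+ x. ennreal (w x * y x powr q) \<partial>M)" rule: ennreal_cases)
  case (real a)
  define I where "I = (\<integral>\<^sup>+ x. ennreal (w x * y x) \<partial>M)"
  \<comment> \<open>the tangent line at \<open>m = 1\<close> shows that \<open>I\<close> is finite, the one at \<open>m = I\<close> gives the claim\<close>
  have tangent: "ennreal (q * m powr (q - 1)) * I \<le> ennreal (a + (q - 1) * m powr q)" if "m \<ge> 0" for m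
    using nn_integral_tangent_line_le[OF q that wm ym w0 y0 w1] real q that
    by (simp add: I_def ennreal_plus)
  have "ennreal q * I < \<top>" using tangent[of 1] by (simp add: le_less_trans)
  with q obtain i where i: "I = ennreal i" "i \<ge> 0"
    by (cases I rule: ennreal_cases) (auto simp: ennreal_mult_eq_top_iff)
  have "ennreal (q * i powr (q - 1) * i) = ennreal (q * i powr (q - 1)) * I"
    unfolding i(1) using i(2) q by (intro ennreal_mult) auto
  with tangent[OF i(2)] have "ennreal (q * i powr (q - 1) * i) \<le> ennreal (a + (q - 1) * i powr q)"
    by (simp only:)
  then have "q * i powr (q - 1) * i \<le> a + (q - 1) * i powr q"
    using real q by (subst (asm) ennreal_le_iff) auto
  moreover have "q * i powr (q - 1) * i = q * i powr q"
    using q i by (cases "i = 0") (auto simp: powr_diff)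
  moreover have "(q - 1) * i powr q = q * i powr q - i powr q" by (simp add: left_diff_distrib)
  ultimately have "i powr q \<le> a" by linarith
  then show ?thesis using i real by (simp add: enn_powr_def flip: I_def)
qed simp

definition modular :: "'a measure \<Rightarrow> ('a \<Rightarrow> real) \<Rightarrow> ('a \<Rightarrow> real) \<Rightarrow> real \<Rightarrow> ennreal" where
  "modular M p F lam = (\<integral>\<^sup>+ x. ennreal (\<bar>F x / lam\<bar> powr p x) \<partial>M)"

definition luxemburg_norm :: "'a measure \<Rightarrow> ('a \<Rightarrow> real) \<Rightarrow> ('a \<Rightarrow> real) \<Rightarrow> ennreal" where
  "luxemburg_norm M p F = Inf (ennreal ` {lam. lam > 0 \<and> modular M p F lam \<le> 1})"

lemma Lvar_norm_eq_luxemburg_norm: "Lvar_norm p F = luxemburg_norm lborel p F"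
  unfolding Lvar_norm_def luxemburg_norm_def modular_def ..

lemma modular_mono:
  assumes "0 < a" "a \<le> b" "\<And>x. p x \<ge> 0" "\<And>x. \<bar>F x\<bar> \<le> \<bar>G x\<bar>"
  shows "modular M p F b \<le> modular M p G a"
  unfolding modular_def
proof (intro nn_integral_mono ennreal_leI)
  fix x
  have "\<bar>F x / b\<bar> \<le> \<bar>G x / a\<bar>"
    using assms(1,2) assms(4)[of x] by (auto simp: abs_div intro!: frac_le)
  then show "\<bar>F x / b\<bar> powr p x \<le> \<bar>G x / a\<bar> powr p x"
    using assms(3) by (intro powr_mono2) auto
qed

lemma modular_cmult: "c > 0 \<Longrightarrow> modular M p (\<lambda>x. c * G x) (c * lam) = modular M p G lam"
  unfolding modular_def by simp

lemma luxemburg_norm_le: "r > 0 \<Longrightarrow> modular M p F r \<le> 1 \<Longrightarrow> luxemburg_norm M p F \<le> ennreal r"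
  unfolding luxemburg_norm_def by (intro Inf_lower) auto

lemma modular_le_1_if_luxemburg_norm_less:
  assumes "luxemburg_norm M p F < ennreal r" "\<And>x. p x \<ge> 0"
  shows "modular M p F r \<le> 1"
proof -
  from assms(1) obtain lam where lam: "lam > 0" "modular M p F lam \<le> 1" "ennreal lam < ennreal r"
    unfolding luxemburg_norm_def Inf_less_iff by auto
  then have "modular M p F r \<le> modular M p F lam"
    using assms(2) by (intro modular_mono) (auto simp: ennreal_less_iff)
  with lam show ?thesis by simp
qed

lemma luxemburg_norm_mono:
  assumes "\<And>x. \<bar>F x\<bar> \<le> \<bar>G x\<bar>" "\<And>x. p x \<ge> 0"
  shows "luxemburg_norm M p F \<le> luxemburg_norm M p G"
  unfolding luxemburg_norm_def
proof (intro Inf_superset_mono image_mono subsetI CollectI conjI)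
  fix lam assume "lam \<in> {lam. lam > 0 \<and> modular M p G lam \<le> 1}"
  then show "lam > 0" "modular M p F lam \<le> 1"
    using modular_mono[of lam lam p F G M] assms by auto
qed

lemma luxemburg_norm_zero: "luxemburg_norm M p (\<lambda>x. 0) = 0"
proof -
  have "luxemburg_norm M p (\<lambda>x. 0) \<le> 0 + ennreal e" if "e > 0" for e
    using that by (simp add: luxemburg_norm_le modular_def)
  then show ?thesis by (metis ennreal_le_epsilon le_zero_eq)
qed

lemma luxemburg_norm_cmult_le:
  assumes c: "c > 0" and p: "\<And>x. p x \<ge> 0"
  shows "luxemburg_norm M p (\<lambda>x. c * G x) \<le> ennreal c * luxemburg_norm M p G"
proof (cases "luxemburg_norm M p G" rule: ennreal_cases)
  case (real l)
  have "luxemburg_norm M p (\<lambda>x. c * G x) \<le> ennreal (c * l) + ennreal e" if e: "e > 0" for e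
  proof -
    have "luxemburg_norm M p G < ennreal (l + e / c)"
      using real e c by (simp add: ennreal_less_iff)
    then have "modular M p G (l + e / c) \<le> 1"
      using p by (rule modular_le_1_if_luxemburg_norm_less)
    then have "luxemburg_norm M p (\<lambda>x. c * G x) \<le> ennreal (c * (l + e / c))"
      using real e c by (intro luxemburg_norm_le) (auto simp: modular_cmult add_nonneg_pos)
    also have "c * (l + e / c) = c * l + e"
      using c by (simp add: field_simps)
    finally show ?thesis
      using real e c by (simp add: ennreal_plus)
  qed
  then have "luxemburg_norm M p (\<lambda>x. c * G x) \<le> ennreal (c * l)"
    by (rule ennreal_le_epsilon)
  then show ?thesis
    using real c by (simp add: ennreal_mult)
next
  case top
  then show ?thesis using c by (simp add: ennreal_mult_top)
qed

lemma luxemburg_norm_cmult: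
  assumes c: "c \<ge> 0" and p: "\<And>x. p x \<ge> 0"
  shows "luxemburg_norm M p (\<lambda>x. c * G x) = ennreal c * luxemburg_norm M p G"
proof (cases "c = 0")
  case True
  then show ?thesis by (simp add: luxemburg_norm_zero)
next
  case False
  with c have c: "c > 0" by simp
  have "ennreal c * luxemburg_norm M p G
      = ennreal c * luxemburg_norm M p (\<lambda>x. (1 / c) * (c * G x))"
    using c by simp
  also have "\<dots> \<le> ennreal c * (ennreal (1 / c) * luxemburg_norm M p (\<lambda>x. c * G x))"
    using c p by (intro mult_left_mono luxemburg_norm_cmult_le) auto
  also have "\<dots> = (ennreal c * ennreal (1 / c)) * luxemburg_norm M p (\<lambda>x. c * G x)"
    by (rule mult.assoc[symmetric])
  also have "ennreal c * ennreal (1 / c) = 1"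
    using c by (simp flip: ennreal_mult)
  finally show ?thesis using luxemburg_norm_cmult_le[OF c p] by (intro antisym) simp_all
qed

lemma luxemburg_norm_INF_rat:
  assumes p: "\<And>x. p x \<ge> 0"
  shows "luxemburg_norm M p F =
    (INF q\<in>{q::rat. 0 < q}. if modular M p F (of_rat q) \<le> 1 then ennreal (of_rat q) else \<top>)"
    (is "_ = ?R")
proof (rule antisym)
  show "luxemburg_norm M p F \<le> ?R"
    by (intro INF_greatest) (auto intro: luxemburg_norm_le)
  show "?R \<le> luxemburg_norm M p F"
    unfolding luxemburg_norm_def
  proof (intro Inf_greatest)
    fix b assume "b \<in> ennreal ` {lam. lam > 0 \<and> modular M p F lam \<le> 1}"
    then obtain lam where b: "b = ennreal lam" "lam > 0" "modular M p F lam \<le> 1" by auto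
    have "?R \<le> ennreal lam + ennreal e" if e: "e > 0" for e
    proof -
      obtain s where s: "s \<in> \<rat>" "lam < s" "s < lam + e"
        using Rats_dense_in_real[of lam "lam + e"] e by auto
      then obtain q where q: "s = of_rat q" using Rats_cases by blast
      have "modular M p F s \<le> modular M p F lam" using s b p by (intro modular_mono) auto
      moreover have "(0::real) < of_rat q" using s q b by linarith
      ultimately have "?R \<le> ennreal (of_rat q)"
        using b q by (intro INF_lower2[of q]) auto
      also have "\<dots> \<le> ennreal lam + ennreal e" using s q b e by (simp flip: ennreal_plus)
      finally show ?thesis .
    qed
    then show "?R \<le> b" unfolding b by (rule ennreal_le_epsilon)
  qed
qed

lemma measurable_luxemburg_norm:
  assumes "sigma_finite_measure N" and p: "\<And>x. p x \<ge> 0" and [measurable]: "p \<in> borel_measurable N"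
    and [measurable]: "(\<lambda>z. H (fst z) (snd z)) \<in> borel_measurable (M \<Otimes>\<^sub>M N)"
  shows "(\<lambda>t. luxemburg_norm N p (H t)) \<in> borel_measurable M"
proof -
  interpret N: sigma_finite_measure N by fact
  have "(\<lambda>t. modular N p (H t) r) \<in> borel_measurable M" for r
    unfolding modular_def by (rule N.borel_measurable_nn_integral) (simp add: split_beta')
  then show ?thesis
    unfolding luxemburg_norm_INF_rat[OF p] by (intro borel_measurable_INF) auto
qed

lemma le_powr_iff_root_le:
  fixes i lam q :: real
  assumes "i \<ge> 0" "lam > 0" "q > 0"
  shows "i \<le> lam powr q \<longleftrightarrow> i powr (1 / q) \<le> lam"
proof
  assume "i \<le> lam powr q"
  then have "i powr (1 / q) \<le> (lam powr q) powr (1 / q)" using assms by (intro powr_mono2) auto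
  then show "i powr (1 / q) \<le> lam" using assms by (simp add: powr_powr)
next
  assume "i powr (1 / q) \<le> lam"
  then have "(i powr (1 / q)) powr q \<le> lam powr q" using assms by (intro powr_mono2) auto
  then show "i \<le> lam powr q" using assms by (simp add: powr_powr)
qed

lemma luxemburg_norm_const_exponent:
  fixes F :: "'a \<Rightarrow> real"
  assumes q: "q > 0" and [measurable]: "F \<in> borel_measurable M"
  shows "luxemburg_norm M (\<lambda>_. q) F = enn_powr (\<integral>\<^sup>+ x. ennreal (\<bar>F x\<bar> powr q) \<partial>M) (1 / q)"
proof -
  define I where "I = (\<integral>\<^sup>+ x. ennreal (\<bar>F x\<bar> powr q) \<partial>M)"
  have modular_eq: "modular M (\<lambda>_. q) F lam = ennreal (1 / lam powr q) * I" if lam: "lam > 0" for lam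
  proof -
    have "ennreal (\<bar>F x / lam\<bar> powr q) = ennreal (1 / lam powr q) * ennreal (\<bar>F x\<bar> powr q)" for x
      using lam by (simp add: abs_div powr_divide flip: ennreal_mult)
    then show ?thesis
      unfolding modular_def I_def by (simp add: nn_integral_cmult)
  qed
  show ?thesis
  proof (cases I rule: ennreal_cases)
    case top
    then have "{lam. lam > 0 \<and> modular M (\<lambda>_. q) F lam \<le> 1} = {}"
      using modular_eq by (auto simp: ennreal_mult_top top_unique)
    then show ?thesis unfolding luxemburg_norm_def enn_powr_def by (simp flip: I_def add: top)
  next
    case (real i)
    define s where "s = i powr (1 / q)"
    have iff: "modular M (\<lambda>_. q) F lam \<le> 1 \<longleftrightarrow> s \<le> lam" if lam: "lam > 0" for lam
    proof -
      have "modular M (\<lambda>_. q) F lam \<le> 1 \<longleftrightarrow> i / lam powr q \<le> 1"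
        unfolding modular_eq[OF lam] real using real lam by (simp add: ennreal_le_1 flip: ennreal_mult)
      also have "\<dots> \<longleftrightarrow> s \<le> lam"
        unfolding s_def using real lam q by (simp add: divide_le_eq_1 le_powr_iff_root_le)
      finally show ?thesis .
    qed
    have "luxemburg_norm M (\<lambda>_. q) F \<le> ennreal s + ennreal e" if "e > 0" for e
    proof -
      have "luxemburg_norm M (\<lambda>_. q) F \<le> ennreal (s + e)"
        using that iff[of "s + e"] by (intro luxemburg_norm_le) (auto simp: s_def add_nonneg_pos)
      then show ?thesis using that by (simp add: s_def ennreal_plus)
    qed
    then have "luxemburg_norm M (\<lambda>_. q) F \<le> ennreal s"
      by (rule ennreal_le_epsilon)
    moreover have "ennreal s \<le> luxemburg_norm M (\<lambda>_. q) F"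
      unfolding luxemburg_norm_def by (rule Inf_greatest) (auto intro!: ennreal_leI simp: iff)
    ultimately show ?thesis
      unfolding enn_powr_def s_def by (simp flip: I_def add: real)
  qed
qed

lemma enn_powr_mono: "x \<le> y \<Longrightarrow> r \<ge> 0 \<Longrightarrow> enn_powr x r \<le> enn_powr y r"
  unfolding enn_powr_def
  by (cases x rule: ennreal_cases; cases y rule: ennreal_cases)
     (auto intro!: ennreal_leI powr_mono2 simp: top_unique)

lemma nn_integral_normal_density:
  "\<sigma> > 0 \<Longrightarrow> (\<integral>\<^sup>+ x. ennreal (normal_density \<mu> \<sigma> x) \<partial>lborel) = 1"
  by (simp add: nn_integral_eq_integral)

lemma exists_positive_majorant:
  fixes N :: "real \<Rightarrow> ennreal"
  assumes [measurable]: "N \<in> borel_measurable lborel"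
    and int_N: "(\<integral>\<^sup>+ t. N t \<partial>lborel) = ennreal a" and a: "a \<ge> 0" and e: "e > 0"
  obtains r where "r \<in> borel_measurable lborel" "\<And>t. r t > 0"
    "AE t in lborel. N t < ennreal (r t)" "(\<integral>\<^sup>+ t. ennreal (r t) \<partial>lborel) = ennreal (a + e)"
proof
  define r where "r t = enn2real (N t) + e * normal_density 0 1 t" for t
  show "r \<in> borel_measurable lborel" unfolding r_def by measurable
  show pos: "r t > 0" for t
    using e normal_density_pos[of 1 0 t] unfolding r_def by (simp add: add_nonneg_pos)
  have fin: "AE t in lborel. N t \<noteq> \<top>"
    using nn_integral_PInf_AE[of N lborel] int_N by simp
  then show "AE t in lborel. N t < ennreal (r t)"
  proof eventually_elim
    case (elim t)
    then have "N t = ennreal (enn2real (N t))" by (simp add: less_top)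
    also have "\<dots> < ennreal (r t)"
      using e normal_density_pos[of 1 0 t] by (simp add: r_def ennreal_less_iff)
    finally show ?case .
  qed
  have "(\<integral>\<^sup>+ t. ennreal (r t) \<partial>lborel)
      = (\<integral>\<^sup>+ t. N t + ennreal e * ennreal (normal_density 0 1 t) \<partial>lborel)"
    using fin by (intro nn_integral_cong_AE, eventually_elim)
      (use e in \<open>simp add: r_def ennreal_plus ennreal_mult less_top[symmetric]\<close>)
  also have "\<dots> = ennreal (a + e)"
    using int_N a e by (simp add: nn_integral_add nn_integral_cmult nn_integral_normal_density ennreal_plus)
  finally show "(\<integral>\<^sup>+ t. ennreal (r t) \<partial>lborel) = ennreal (a + e)" .
qed

lemma nn_integral_normalized_density:
  assumes "r \<in> borel_measurable M" "\<And>t. r t \<ge> 0" "b > 0" "(\<integral>\<^sup>+ t. ennreal (r t) \<partial>M) = ennreal b"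
  shows "(\<integral>\<^sup>+ t. ennreal (r t / b) \<partial>M) = 1"
proof -
  have "(\<integral>\<^sup>+ t. ennreal (r t / b) \<partial>M) = (\<integral>\<^sup>+ t. ennreal (1 / b) * ennreal (r t) \<partial>M)"
    using assms by (intro nn_integral_cong) (simp add: less_imp_le flip: ennreal_mult')
  also have "\<dots> = ennreal (1 / b) * ennreal b"
    using assms by (simp add: nn_integral_cmult)
  also have "\<dots> = 1"
    using assms by (simp flip: ennreal_mult)
  finally show ?thesis .
qed

lemma abs_div_powr_le_nn_integral:
  fixes H r :: "'a \<Rightarrow> real"
  assumes p: "p \<ge> 1" and [measurable]: "H \<in> borel_measurable M" "r \<in> borel_measurable M"
    and H0: "\<And>t. H t \<ge> 0" and r0: "\<And>t. r t > 0"
    and b: "b > 0" "(\<integral>\<^sup>+ t. ennreal (r t) \<partial>M) = ennreal b"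
    and f: "ennreal \<bar>f\<bar> \<le> (\<integral>\<^sup>+ t. ennreal (H t) \<partial>M)"
  shows "ennreal (\<bar>f / b\<bar> powr p) \<le> (\<integral>\<^sup>+ t. ennreal (r t / b * (H t / r t) powr p) \<partial>M)"
proof -
  \<comment> \<open>Jensen's inequality for the probability density \<open>w\<close> applied to \<open>y\<close>\<close>
  define w where "w t = r t / b" for t
  define y where "y t = H t / r t" for t
  have [measurable]: "w \<in> borel_measurable M" "y \<in> borel_measurable M"
    unfolding w_def y_def by measurable
  have w0: "w t \<ge> 0" and y0: "y t \<ge> 0" for t
    using r0[of t] b H0[of t] by (simp_all add: w_def y_def)
  have "H t = b * (w t * y t)" for t
    using r0[of t] b by (simp add: w_def y_def)
  then have "(\<integral>\<^sup>+ t. ennreal (H t) \<partial>M) = (\<integral>\<^sup>+ t. ennreal b * ennreal (w t * y t) \<partial>M)"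
    using b w0 y0 by (simp add: ennreal_mult)
  also have "\<dots> = ennreal b * (\<integral>\<^sup>+ t. ennreal (w t * y t) \<partial>M)"
    by (simp add: nn_integral_cmult)
  finally have "ennreal \<bar>f / b\<bar> \<le> (\<integral>\<^sup>+ t. ennreal (w t * y t) \<partial>M)"
    using f b by (cases "\<integral>\<^sup>+ t. ennreal (w t * y t) \<partial>M" rule: ennreal_cases)
      (auto simp: abs_div divide_le_eq mult.commute ennreal_mult[symmetric])
  then have "enn_powr (ennreal \<bar>f / b\<bar>) p \<le> enn_powr (\<integral>\<^sup>+ t. ennreal (w t * y t) \<partial>M) p"
    using p by (intro enn_powr_mono) auto
  also have "\<dots> \<le> (\<integral>\<^sup>+ t. ennreal (w t * y t powr p) \<partial>M)"
    using p w0 y0 r0 b nn_integral_normalized_density[of r M b]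
    by (intro jensen_nn_integral_powr) (auto simp: w_def less_imp_le)
  finally show ?thesis unfolding w_def y_def by (simp add: enn_powr_def)
qed

lemma modular_le_1_if_le_integral:
  fixes H :: "real \<Rightarrow> 'a \<Rightarrow> real" and F :: "'a \<Rightarrow> real"
  assumes "sigma_finite_measure N"
    and p1: "\<And>x. p x \<ge> 1" and [measurable]: "p \<in> borel_measurable N"
    and Hm[measurable]: "(\<lambda>z. H (fst z) (snd z)) \<in> borel_measurable (lborel \<Otimes>\<^sub>M N)"
    and H0: "\<And>t x. H t x \<ge> 0"
    and FH: "\<And>x. ennreal \<bar>F x\<bar> \<le> (\<integral>\<^sup>+ t. ennreal (H t x) \<partial>lborel)"
    and [measurable]: "r \<in> borel_measurable lborel" and r0: "\<And>t. r t > 0"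
    and r_modular: "AE t in lborel. modular N p (H t) (r t) \<le> 1"
    and b: "b > 0" "(\<integral>\<^sup>+ t. ennreal (r t) \<partial>lborel) = ennreal b"
  shows "modular N p F b \<le> 1"
proof -
  interpret pair_sigma_finite lborel N
    by (intro pair_sigma_finite.intro lborel.sigma_finite_measure_axioms assms(1))
  have "modular N p F b \<le> (\<integral>\<^sup>+ x. (\<integral>\<^sup>+ t. ennreal (r t / b * (H t x / r t) powr p x) \<partial>lborel) \<partial>N)"
    unfolding modular_def
  proof (intro nn_integral_mono)
    fix x assume "x \<in> space N"
    then have "(\<lambda>t. H t x) \<in> borel_measurable lborel"
      using measurable_Pair1[OF Hm] by simp
    then show "ennreal (\<bar>F x / b\<bar> powr p x) \<le> (\<integral>\<^sup>+ t. ennreal (r t / b * (H t x / r t) powr p x) \<partial>lborel)"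
      using p1 H0 r0 b FH by (intro abs_div_powr_le_nn_integral) auto
  qed
  also have "\<dots> = (\<integral>\<^sup>+ t. (\<integral>\<^sup>+ x. ennreal (r t / b * (H t x / r t) powr p x) \<partial>N) \<partial>lborel)"
    by (rule Fubini') (simp add: split_beta')
  also have "\<dots> = (\<integral>\<^sup>+ t. ennreal (r t / b) * modular N p (H t) (r t) \<partial>lborel)"
  proof (intro nn_integral_cong)
    fix t
    have [measurable]: "H t \<in> borel_measurable N"
      using measurable_Pair2[OF Hm] by simp
    have "ennreal (r t / b * (H t x / r t) powr p x) = ennreal (r t / b) * ennreal (\<bar>H t x / r t\<bar> powr p x)" for x
      using H0[of t x] r0[of t] b by (subst ennreal_mult[symmetric]) auto
    then show "(\<integral>\<^sup>+ x. ennreal (r t / b * (H t x / r t) powr p x) \<partial>N) = ennreal (r t / b) * modular N p (H t) (r t)"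
      unfolding modular_def by (simp add: nn_integral_cmult)
  qed
  also have "\<dots> \<le> (\<integral>\<^sup>+ t. ennreal (r t / b) \<partial>lborel)"
    using r_modular by (intro nn_integral_mono_AE, eventually_elim) (simp add: mult_left_le)
  also have "\<dots> = 1"
    using r0 b by (intro nn_integral_normalized_density) (auto simp: less_imp_le)
  finally show ?thesis .
qed

theorem minkowski_integral_luxemburg_norm:
  fixes H :: "real \<Rightarrow> 'a \<Rightarrow> real" and F :: "'a \<Rightarrow> real"
  assumes N: "sigma_finite_measure N"
    and p1: "\<And>x. p x \<ge> 1" and pm[measurable]: "p \<in> borel_measurable N"
    and Hm[measurable]: "(\<lambda>z. H (fst z) (snd z)) \<in> borel_measurable (lborel \<Otimes>\<^sub>M N)"
    and H0: "\<And>t x. H t x \<ge> 0"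
    and FH: "\<And>x. ennreal \<bar>F x\<bar> \<le> (\<integral>\<^sup>+ t. ennreal (H t x) \<partial>lborel)"
  shows "luxemburg_norm N p F \<le> (\<integral>\<^sup>+ t. luxemburg_norm N p (H t) \<partial>lborel)"
proof (cases "\<integral>\<^sup>+ t. luxemburg_norm N p (H t) \<partial>lborel" rule: ennreal_cases)
  case (real a)
  have p0: "\<And>x. p x \<ge> 0" using p1 by (meson order.trans zero_le_one)
  have Nm: "(\<lambda>t. luxemburg_norm N p (H t)) \<in> borel_measurable lborel"
    by (rule measurable_luxemburg_norm[OF N p0 pm Hm])
  have le: "luxemburg_norm N p F \<le> ennreal (a + e)" if e: "e > 0" for e
  proof -
    obtain r where rm: "r \<in> borel_measurable lborel" and r0: "\<And>t. r t > 0"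
      and r_less: "AE t in lborel. luxemburg_norm N p (H t) < ennreal (r t)"
      and int_r: "(\<integral>\<^sup>+ t. ennreal (r t) \<partial>lborel) = ennreal (a + e)"
      using exists_positive_majorant[OF Nm real(2,1) e] by blast
    have "AE t in lborel. modular N p (H t) (r t) \<le> 1"
      using r_less by eventually_elim (simp add: modular_le_1_if_luxemburg_norm_less p0)
    moreover have "a + e > 0" using real e by simp
    ultimately have "modular N p F (a + e) \<le> 1"
      using modular_le_1_if_le_integral[OF N p1 pm Hm H0 FH rm r0 _ _ int_r] by blast
    then show ?thesis using \<open>a + e > 0\<close> by (rule luxemburg_norm_le[rotated])
  qed
  show ?thesis
    unfolding real(2) by (rule ennreal_le_epsilon) (use le real(1) in \<open>simp add: ennreal_plus\<close>)
qed simp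

section \<open>Time norms and Young's inequality for an exponential kernel\<close>

lemma enn_powr_1: "enn_powr x 1 = x"
  unfolding enn_powr_def by (cases x rule: ennreal_cases) auto

lemma enn_powr_cmult:
  assumes "c > 0"
  shows "enn_powr (ennreal c * x) r = ennreal (c powr r) * enn_powr x r"
proof (cases x rule: ennreal_cases)
  case (real y)
  have cy: "ennreal c * ennreal y = ennreal (c * y)" using real assms by (simp add: ennreal_mult)
  show ?thesis
    unfolding real(2) cy enn_powr_def using real(1) assms by (simp add: powr_mult ennreal_mult[symmetric])
qed (use assms in \<open>simp add: enn_powr_def ennreal_mult_top\<close>)

lemma measurable_enn_powr[measurable]:
  assumes [measurable]: "f \<in> borel_measurable M"
  shows "(\<lambda>x. enn_powr (f x) r) \<in> borel_measurable M"
  unfolding enn_powr_def by measurable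

lemma Lt_norm_1: "Lt_norm 1 N = (\<integral>\<^sup>+ t. N t * indicator {0<..} t \<partial>lborel)"
  unfolding Lt_norm_def by (simp add: enn_powr_1)

lemma Lt_norm_mono_finite:
  assumes "\<And>t. t > 0 \<Longrightarrow> N t \<le> N' t" "\<rho> \<noteq> \<top>"
  shows "Lt_norm \<rho> N \<le> Lt_norm \<rho> N'"
  unfolding Lt_norm_def using assms
  by (auto simp: indicator_def intro!: enn_powr_mono nn_integral_mono)

lemma Lt_norm_eq_luxemburg_norm:
  fixes n :: "real \<Rightarrow> real"
  assumes r: "r \<ge> 1" and n0: "\<And>t. n t \<ge> 0" and [measurable]: "n \<in> borel_measurable lborel"
  shows "Lt_norm (ennreal r) (\<lambda>t. ennreal (n t)) = luxemburg_norm lborel (\<lambda>_. r) (\<lambda>t. n t * indicator {0<..} t)"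
proof -
  have "enn_powr (ennreal (n t)) r * indicator {0<..} t = ennreal (\<bar>n t * indicator {0<..} t\<bar> powr r)" for t
    using n0[of t] r by (auto simp: enn_powr_def indicator_def)
  then show ?thesis
    unfolding Lt_norm_def using r by (simp add: luxemburg_norm_const_exponent)
qed

lemma esssup_cmult_ennreal:
  assumes c: "c > 0" and [measurable]: "f \<in> borel_measurable M"
  shows "esssup M (\<lambda>x. ennreal c * f x) = ennreal c * esssup M f"
proof (rule antisym)
  show "esssup M (\<lambda>x. ennreal c * f x) \<le> ennreal c * esssup M f"
    using esssup_AE[of f M] by (intro esssup_I) (auto elim!: eventually_mono intro: mult_left_mono)
  have "esssup M f = esssup M (\<lambda>x. ennreal (1 / c) * (ennreal c * f x))"
    using c by (simp add: mult.assoc[symmetric] flip: ennreal_mult)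
  also have "\<dots> \<le> ennreal (1 / c) * esssup M (\<lambda>x. ennreal c * f x)"
    using esssup_AE[of "\<lambda>x. ennreal c * f x" M] by (intro esssup_I) (auto elim!: eventually_mono intro: mult_left_mono)
  finally have "ennreal c * esssup M f \<le> ennreal c * ennreal (1 / c) * esssup M (\<lambda>x. ennreal c * f x)"
    by (simp add: mult.assoc mult_left_mono)
  also have "ennreal c * ennreal (1 / c) = 1"
    using c by (simp flip: ennreal_mult)
  finally show "ennreal c * esssup M f \<le> esssup M (\<lambda>x. ennreal c * f x)" by simp
qed

lemma Lt_norm_cmult:
  assumes c: "c > 0" and \<rho>: "\<rho> \<ge> 1" and [measurable]: "N \<in> borel_measurable lborel"
  shows "Lt_norm \<rho> (\<lambda>t. ennreal c * N t) = ennreal c * Lt_norm \<rho> N"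
proof (cases "\<rho> = \<top>")
  case True
  then show ?thesis
    unfolding Lt_norm_def using c by (simp add: esssup_cmult_ennreal measurable_restrict_space1)
next
  case False
  with \<rho> obtain r where r: "\<rho> = ennreal r" "r \<ge> 1"
    by (cases \<rho> rule: ennreal_cases) (auto simp flip: ennreal_1)
  have "(\<integral>\<^sup>+ t\<in>{0<..}. enn_powr (ennreal c * N t) r \<partial>lborel)
      = ennreal (c powr r) * (\<integral>\<^sup>+ t\<in>{0<..}. enn_powr (N t) r \<partial>lborel)"
    using c by (simp add: enn_powr_cmult nn_integral_cmult mult.assoc)
  moreover have "(c powr r) powr (1 / r) = c" using c r by (simp add: powr_powr)
  ultimately show ?thesis
    unfolding Lt_norm_def using c r by (simp add: enn_powr_cmult)
qed

text \<open>On frequencies with \<open>\<kappa> \<le> |\<xi>|\<^sup>2\<close> this kernel dominates the Duhamel kernel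
  \<open>indicator {0..t} \<tau> * exp (- (t - \<tau>) * |\<xi>|\<^sup>2)\<close>.\<close>

definition decay_kernel :: "real \<Rightarrow> real \<Rightarrow> real \<Rightarrow> real" where
  "decay_kernel \<kappa> t \<tau> = indicator {0..t} \<tau> * exp (- (t - \<tau>) * \<kappa>)"

lemma decay_kernel_nonneg: "decay_kernel \<kappa> t \<tau> \<ge> 0"
  by (simp add: decay_kernel_def)

lemma decay_kernel_le_1: "\<kappa> \<ge> 0 \<Longrightarrow> decay_kernel \<kappa> t \<tau> \<le> 1"
  by (simp add: decay_kernel_def indicator_def mult_nonpos_nonneg)

lemma measurable_decay_kernel[measurable]:
  assumes [measurable]: "k \<in> borel_measurable M" "f \<in> borel_measurable M" "h \<in> borel_measurable M"
  shows "(\<lambda>x. decay_kernel (k x) (f x) (h x)) \<in> borel_measurable M"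
proof -
  have "(\<lambda>x. if 0 \<le> h x \<and> h x \<le> f x then exp (- (f x - h x) * k x) else 0) \<in> borel_measurable M"
    by measurable
  then show ?thesis
    by (rule measurable_cong[THEN iffD1, rotated]) (simp add: decay_kernel_def indicator_def)
qed

lemma nn_integral_exp_decay:
  assumes "\<kappa> > 0"
  shows "(\<integral>\<^sup>+ t. ennreal (indicator {\<tau>..} t * exp (- (t - \<tau>) * \<kappa>)) \<partial>lborel) = ennreal (1 / \<kappa>)"
proof -
  have "(\<integral>\<^sup>+ t. ennreal (indicator {\<tau>..} t * exp (- (t - \<tau>) * \<kappa>)) \<partial>lborel)
      = (\<integral>\<^sup>+ t. ennreal (indicator {\<tau>..} (\<tau> + 1 * t) * exp (- ((\<tau> + 1 * t) - \<tau>) * \<kappa>)) \<partial>lborel)"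
    using nn_integral_real_affine[of "\<lambda>t. ennreal (indicator {\<tau>..} t * exp (- (t - \<tau>) * \<kappa>))" 1 \<tau>]
    by simp
  also have "\<dots> = (\<integral>\<^sup>+ t. ennreal (1 / \<kappa>) * ennreal (exponential_density \<kappa> t) \<partial>lborel)"
    using assms by (intro nn_integral_cong)
      (auto simp: exponential_density_def indicator_def ennreal_mult[symmetric])
  also have "\<dots> = ennreal (1 / \<kappa>) * (\<integral>\<^sup>+ t. ennreal (exponential_density \<kappa> t) \<partial>lborel)"
    by (simp add: nn_integral_cmult)
  also have "(\<integral>\<^sup>+ t. ennreal (exponential_density \<kappa> t) \<partial>lborel) = 1"
    using prob_space.emeasure_space_1[OF prob_space_exponential_density[OF assms]]
    by (simp add: emeasure_density)
  finally show ?thesis by simp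
qed

lemma luxemburg_norm_decay_kernel_le:
  assumes r: "r \<ge> 1" and \<kappa>: "\<kappa> > 0"
  shows "luxemburg_norm lborel (\<lambda>_. r) (\<lambda>t. decay_kernel \<kappa> t \<tau> * indicator {0<..} t)
    \<le> ennreal ((1 / (\<kappa> * r)) powr (1 / r))"
proof -
  have "luxemburg_norm lborel (\<lambda>_. r) (\<lambda>t. decay_kernel \<kappa> t \<tau> * indicator {0<..} t)
      \<le> luxemburg_norm lborel (\<lambda>_. r) (\<lambda>t. indicator {\<tau>..} t * exp (- (t - \<tau>) * \<kappa>))"
    using r by (intro luxemburg_norm_mono) (auto simp: decay_kernel_def indicator_def)
  also have "\<dots> = enn_powr (\<integral>\<^sup>+ t. ennreal (\<bar>indicator {\<tau>..} t * exp (- (t - \<tau>) * \<kappa>)\<bar> powr r) \<partial>lborel) (1 / r)"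
    using r by (simp add: luxemburg_norm_const_exponent)
  also have "(\<integral>\<^sup>+ t. ennreal (\<bar>indicator {\<tau>..} t * exp (- (t - \<tau>) * \<kappa>)\<bar> powr r) \<partial>lborel)
      = (\<integral>\<^sup>+ t. ennreal (indicator {\<tau>..} t * exp (- (t - \<tau>) * (\<kappa> * r))) \<partial>lborel)"
    using r by (intro nn_integral_cong) (auto simp: indicator_def powr_def mult_ac)
  also have "\<dots> = ennreal (1 / (\<kappa> * r))"
    using r \<kappa> by (intro nn_integral_exp_decay) simp
  also have "enn_powr (ennreal (1 / (\<kappa> * r))) (1 / r) = ennreal ((1 / (\<kappa> * r)) powr (1 / r))"
    using r \<kappa> by (simp add: enn_powr_def)
  finally show ?thesis .
qed

lemma Lt_norm_top_decay_convolution_le: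
  fixes N a :: "real \<Rightarrow> ennreal"
  assumes \<kappa>: "\<kappa> \<ge> 0" and c: "c \<ge> 0"
    and [measurable]: "N \<in> borel_measurable lborel" "a \<in> borel_measurable lborel"
    and bound: "\<And>t. N t \<le> (\<integral>\<^sup>+ \<tau>. ennreal (c * decay_kernel \<kappa> t \<tau>) * a \<tau> \<partial>lborel)"
  shows "Lt_norm \<top> N \<le> ennreal c * Lt_norm 1 a"
proof -
  have "N t \<le> ennreal c * Lt_norm 1 a" for t
  proof -
    have "N t \<le> (\<integral>\<^sup>+ \<tau>. ennreal c * (a \<tau> * indicator {0<..} \<tau>) \<partial>lborel)"
      using bound[of t]
    proof (rule order_trans, intro nn_integral_mono_AE)
      show "AE \<tau> in lborel. ennreal (c * decay_kernel \<kappa> t \<tau>) * a \<tau> \<le> ennreal c * (a \<tau> * indicator {0<..} \<tau>)"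
        using AE_lborel_singleton[of 0]
      proof eventually_elim
        case (elim \<tau>)
        have "ennreal (c * decay_kernel \<kappa> t \<tau>) \<le> ennreal c * indicator {0<..} \<tau>"
          using elim \<kappa> c decay_kernel_le_1[OF \<kappa>, of t \<tau>]
          by (auto simp: decay_kernel_def indicator_def intro!: ennreal_leI mult_left_le)
        then show ?case by (metis mult.assoc mult.commute mult_left_mono zero_le)
      qed
    qed
    then show ?thesis unfolding Lt_norm_1 by (simp add: nn_integral_cmult)
  qed
  then show ?thesis
    unfolding Lt_norm_def by (simp add: esssup_I measurable_restrict_space1)
qed

lemma Lt_norm_decay_convolution_real_le:
  fixes a :: "real \<Rightarrow> real"
  assumes r: "r \<ge> 1" and \<kappa>: "\<kappa> > 0" and c: "c > 0"
    and [measurable]: "a \<in> borel_measurable lborel" and a0: "\<And>\<tau>. a \<tau> \<ge> 0"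
  shows "Lt_norm (ennreal r) (\<lambda>t. \<integral>\<^sup>+ \<tau>. ennreal (c * decay_kernel \<kappa> t \<tau> * a \<tau>) \<partial>lborel)
    \<le> ennreal (c * (1 / (\<kappa> * r)) powr (1 / r)) * (\<integral>\<^sup>+ \<tau>. ennreal (a \<tau>) \<partial>lborel)"
proof (cases "\<integral>\<^sup>+ \<tau>. ennreal (a \<tau>) \<partial>lborel" rule: ennreal_cases)
  case (real A)
  define B where "B t = (\<integral>\<^sup>+ \<tau>. ennreal (c * decay_kernel \<kappa> t \<tau> * a \<tau>) \<partial>lborel)" for t
  define b where "b t = enn2real (B t)" for t
  have "B t \<le> (\<integral>\<^sup>+ \<tau>. ennreal c * ennreal (a \<tau>) \<partial>lborel)" for t
    unfolding B_def using c a0 decay_kernel_le_1[of \<kappa>] \<kappa>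
    by (intro nn_integral_mono) (simp add: ennreal_mult[symmetric] mult_left_le_one_le decay_kernel_nonneg)
  then have "B t \<le> ennreal (c * A)" for t
    using real c by (simp add: nn_integral_cmult ennreal_mult)
  then have "B t \<noteq> \<top>" for t
    by (metis ennreal_neq_top top_unique)
  then have B_eq: "B t = ennreal (b t)" for t
    by (simp add: b_def less_top)
  have bm[measurable]: "b \<in> borel_measurable lborel"
    unfolding b_def B_def by measurable
  have "Lt_norm (ennreal r) B = luxemburg_norm lborel (\<lambda>_. r) (\<lambda>t. b t * indicator {0<..} t)"
    unfolding B_eq by (rule Lt_norm_eq_luxemburg_norm[OF r _ bm]) (simp add: b_def)
  also have "\<dots> \<le> (\<integral>\<^sup>+ \<tau>. luxemburg_norm lborel (\<lambda>_. r)
      (\<lambda>t. (a \<tau> * c) * (decay_kernel \<kappa> t \<tau> * indicator {0<..} t)) \<partial>lborel)"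
  proof (rule minkowski_integral_luxemburg_norm)
    show "ennreal \<bar>b t * indicator {0<..} t\<bar>
        \<le> (\<integral>\<^sup>+ \<tau>. ennreal (a \<tau> * c * (decay_kernel \<kappa> t \<tau> * indicator {0<..} t)) \<partial>lborel)" for t
      using B_eq[of t] by (cases "t > 0") (simp_all add: B_def b_def mult_ac)
  qed (use r c a0 decay_kernel_nonneg in \<open>auto intro: lborel.sigma_finite_measure_axioms\<close>)
  also have "\<dots> \<le> (\<integral>\<^sup>+ \<tau>. ennreal (a \<tau>) * ennreal (c * (1 / (\<kappa> * r)) powr (1 / r)) \<partial>lborel)"
  proof (intro nn_integral_mono)
    fix \<tau>
    have "luxemburg_norm lborel (\<lambda>_. r) (\<lambda>t. (a \<tau> * c) * (decay_kernel \<kappa> t \<tau> * indicator {0<..} t))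
        = ennreal (a \<tau> * c) * luxemburg_norm lborel (\<lambda>_. r) (\<lambda>t. decay_kernel \<kappa> t \<tau> * indicator {0<..} t)"
      using a0 c r by (intro luxemburg_norm_cmult) auto
    also have "\<dots> \<le> ennreal (a \<tau> * c) * ennreal ((1 / (\<kappa> * r)) powr (1 / r))"
      using r \<kappa> by (intro mult_left_mono luxemburg_norm_decay_kernel_le) auto
    finally show "luxemburg_norm lborel (\<lambda>_. r) (\<lambda>t. (a \<tau> * c) * (decay_kernel \<kappa> t \<tau> * indicator {0<..} t))
        \<le> ennreal (a \<tau>) * ennreal (c * (1 / (\<kappa> * r)) powr (1 / r))"
      using a0[of \<tau>] c by (simp add: ennreal_mult mult_ac)
  qed
  also have "\<dots> = ennreal (c * (1 / (\<kappa> * r)) powr (1 / r)) * (\<integral>\<^sup>+ \<tau>. ennreal (a \<tau>) \<partial>lborel)"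
    by (simp add: nn_integral_multc mult.commute)
  finally show ?thesis unfolding B_def .
qed (use c \<kappa> r in \<open>simp add: ennreal_mult_top\<close>)

lemma Lt_norm_decay_convolution_le:
  fixes N a :: "real \<Rightarrow> ennreal"
  assumes r: "r \<ge> 1" and \<kappa>: "\<kappa> > 0" and c: "c > 0" and [measurable]: "a \<in> borel_measurable lborel"
    and bound: "\<And>t. N t \<le> (\<integral>\<^sup>+ \<tau>. ennreal (c * decay_kernel \<kappa> t \<tau>) * a \<tau> \<partial>lborel)"
  shows "Lt_norm (ennreal r) N \<le> ennreal (c * (1 / (\<kappa> * r)) powr (1 / r)) * Lt_norm 1 a"
proof (cases "Lt_norm 1 a = \<top>")
  case False
  \<comment> \<open>Minkowski's inequality needs a real-valued \<open>a\<close>; it is finite a.e. on \<open>{0<..}\<close>\<close>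
  define a' where "a' \<tau> = enn2real (a \<tau>) * indicator {0<..} \<tau>" for \<tau>
  have "AE \<tau> in lborel. a \<tau> * indicator {0<..} \<tau> \<noteq> \<top>"
    using False nn_integral_PInf_AE[of "\<lambda>\<tau>. a \<tau> * indicator {0<..} \<tau>" lborel]
    by (simp add: Lt_norm_1)
  then have a'_eq: "AE \<tau> in lborel. ennreal (a' \<tau>) = a \<tau> * indicator {0<..} \<tau>"
    by eventually_elim (auto simp: a'_def indicator_def less_top)
  then have a'_int: "Lt_norm 1 a = (\<integral>\<^sup>+ \<tau>. ennreal (a' \<tau>) \<partial>lborel)"
    unfolding Lt_norm_1 by (intro nn_integral_cong_AE) (simp add: eq_commute)
  have "N t \<le> (\<integral>\<^sup>+ \<tau>. ennreal (c * decay_kernel \<kappa> t \<tau> * a' \<tau>) \<partial>lborel)" for t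
    using bound[of t]
  proof (rule order_trans, intro nn_integral_mono_AE)
    show "AE \<tau> in lborel. ennreal (c * decay_kernel \<kappa> t \<tau>) * a \<tau> \<le> ennreal (c * decay_kernel \<kappa> t \<tau> * a' \<tau>)"
      using a'_eq AE_lborel_singleton[of 0]
      by eventually_elim
        (use c in \<open>auto simp: decay_kernel_def indicator_def ennreal_mult a'_def\<close>)
  qed
  then have "Lt_norm (ennreal r) N
      \<le> Lt_norm (ennreal r) (\<lambda>t. \<integral>\<^sup>+ \<tau>. ennreal (c * decay_kernel \<kappa> t \<tau> * a' \<tau>) \<partial>lborel)"
    by (intro Lt_norm_mono_finite) auto
  also have "\<dots> \<le> ennreal (c * (1 / (\<kappa> * r)) powr (1 / r)) * (\<integral>\<^sup>+ \<tau>. ennreal (a' \<tau>) \<partial>lborel)"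
    using r \<kappa> c by (intro Lt_norm_decay_convolution_real_le) (auto simp: a'_def)
  finally show ?thesis unfolding a'_int .
qed (use c \<kappa> r in \<open>simp add: ennreal_mult_top\<close>)

section \<open>The Duhamel term on a dyadic block\<close>

lemma abs_component_product_le_norm_square: "\<bar>(\<xi>::real^'n) $ i * \<xi> $ j\<bar> \<le> (norm \<xi>)\<^sup>2"
  unfolding abs_mult power2_eq_square by (intro mult_mono component_le_norm_cart) auto

lemma norm_leray_component_le: "norm (leray \<xi> v $ i) \<le> 4 * norm v"
proof -
  have coeff: "norm (complex_of_real (\<xi> $ i * \<xi> $ j / (norm \<xi>)\<^sup>2) * v $ j) \<le> norm v" for j
  proof -
    have "\<bar>\<xi> $ i * \<xi> $ j / (norm \<xi>)\<^sup>2\<bar> \<le> 1"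
      using abs_component_product_le_norm_square[of \<xi> i j]
      by (cases "\<xi> = 0") (auto simp: abs_div divide_le_eq_1)
    then have "\<bar>\<xi> $ i * \<xi> $ j / (norm \<xi>)\<^sup>2\<bar> * norm (v $ j) \<le> 1 * norm v"
      by (intro mult_mono Finite_Cartesian_Product.norm_nth_le) auto
    then show ?thesis
      unfolding norm_mult norm_of_real by simp
  qed
  have "norm (leray \<xi> v $ i)
      \<le> norm (v $ i) + (\<Sum>j\<in>UNIV. norm (complex_of_real (\<xi> $ i * \<xi> $ j / (norm \<xi>)\<^sup>2) * v $ j))"
    unfolding leray_def by (simp add: norm_triangle_le_diff norm_sum)
  also have "\<dots> \<le> norm v + (\<Sum>j\<in>(UNIV::3 set). norm v)"
    by (intro add_mono sum_mono coeff Finite_Cartesian_Product.norm_nth_le)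
  finally show ?thesis by simp
qed

lemma norm_leray_le: "norm (leray \<xi> v) \<le> 12 * norm v"
proof -
  have "norm (leray \<xi> v) \<le> (\<Sum>i\<in>UNIV. norm (leray \<xi> v $ i))"
    unfolding norm_vec_def by (rule L2_set_le_sum) simp
  also have "\<dots> \<le> (\<Sum>i\<in>(UNIV::3 set). 4 * norm v)"
    by (intro sum_mono norm_leray_component_le)
  finally show ?thesis by simp
qed

lemma borel_measurable_vec_nth[measurable]:
  "(\<lambda>x::'a::real_normed_vector^'n. x $ i) \<in> borel_measurable borel"
  by (intro borel_measurable_continuous_onI continuous_on_component continuous_on_id)

lemma borel_measurable_leray_pair: "(\<lambda>z. leray (fst z) (snd z)) \<in> borel_measurable borel"
proof (subst borel_measurable_euclidean_space, intro ballI)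
  fix b :: "complex^3" assume "b \<in> Basis"
  then obtain i u where b: "b = axis i u" "u \<in> Basis" unfolding Basis_vec_def by auto
  have "(\<lambda>z::(real^3) \<times> (complex^3). leray (fst z) (snd z) $ i) \<in> borel_measurable borel"
    unfolding leray_def by (simp add: borel_prod[symmetric]) measurable
  then show "(\<lambda>z. leray (fst z) (snd z) \<bullet> b) \<in> borel_measurable borel"
    unfolding b inner_axis by measurable
qed

lemma borel_measurable_leray[measurable]:
  assumes [measurable]: "f \<in> borel_measurable M" "h \<in> borel_measurable M"
  shows "(\<lambda>x. leray (f x) (h x)) \<in> borel_measurable M"
proof -
  have "(\<lambda>x. (f x, h x)) \<in> M \<rightarrow>\<^sub>M borel \<Otimes>\<^sub>M borel" by measurable
  then have "(\<lambda>x. (f x, h x)) \<in> borel_measurable M" by (simp add: borel_prod)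
  from measurable_compose[OF this borel_measurable_leray_pair] show ?thesis by simp
qed

lemma borel_measurable_duhamel_hat:
  assumes [measurable]: "(\<lambda>z. g (fst z) (snd z)) \<in> borel_measurable (lborel \<Otimes>\<^sub>M lborel)"
  shows "(\<lambda>z. duhamel_hat g (fst z) (snd z)) \<in> borel_measurable (lborel \<Otimes>\<^sub>M lborel)"
proof -
  let ?M = "((lborel::real measure) \<Otimes>\<^sub>M (lborel::(real^3) measure)) \<Otimes>\<^sub>M (lborel::real measure)"
  have "(\<lambda>w. (snd w, snd (fst w))) \<in> ?M \<rightarrow>\<^sub>M lborel \<Otimes>\<^sub>M lborel" by measurable
  from measurable_compose[OF this assms]
  have [measurable]: "(\<lambda>w. g (snd w) (snd (fst w))) \<in> borel_measurable ?M" by simp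
  have "(\<lambda>w. decay_kernel ((norm (snd (fst w)))\<^sup>2) (fst (fst w)) (snd w) *\<^sub>R
      leray (snd (fst w)) (g (snd w) (snd (fst w)))) \<in> borel_measurable ?M"
    by measurable
  then have "(\<lambda>(x, \<tau>). indicator {0..fst x} \<tau> *\<^sub>R
      (exp (- (fst x - \<tau>) * (norm (snd x))\<^sup>2) *\<^sub>R leray (snd x) (g \<tau> (snd x)))) \<in> borel_measurable ?M"
    by (simp add: split_beta' decay_kernel_def)
  from lborel.borel_measurable_lebesgue_integral[OF this]
  show ?thesis unfolding duhamel_hat_def set_lebesgue_integral_def by (simp add: split_beta')
qed

lemma norm_duhamel_hat_le:
  assumes "\<kappa> \<le> (norm \<xi>)\<^sup>2"
  shows "ennreal (norm (duhamel_hat g t \<xi>))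
    \<le> (\<integral>\<^sup>+ \<tau>. ennreal (12 * decay_kernel \<kappa> t \<tau> * norm (g \<tau> \<xi>)) \<partial>lborel)"
proof -
  define f where "f \<tau> = indicator {0..t} \<tau> *\<^sub>R (exp (- (t - \<tau>) * (norm \<xi>)\<^sup>2) *\<^sub>R leray \<xi> (g \<tau> \<xi>))" for \<tau>
  have "norm (duhamel_hat g t \<xi>) \<le> (\<integral>\<^sup>+ \<tau>. norm (f \<tau>) \<partial>lborel)"
    unfolding duhamel_hat_def set_lebesgue_integral_def f_def[symmetric]
    by (cases "integrable lborel f") (simp_all add: integral_norm_bound_ennreal not_integrable_integral_eq)
  also have "\<dots> \<le> (\<integral>\<^sup>+ \<tau>. ennreal (12 * decay_kernel \<kappa> t \<tau> * norm (g \<tau> \<xi>)) \<partial>lborel)"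
  proof (intro nn_integral_mono ennreal_leI)
    fix \<tau>
    show "norm (f \<tau>) \<le> 12 * decay_kernel \<kappa> t \<tau> * norm (g \<tau> \<xi>)"
    proof (cases "\<tau> \<in> {0..t}")
      case True
      then have "exp (- (t - \<tau>) * (norm \<xi>)\<^sup>2) * norm (leray \<xi> (g \<tau> \<xi>))
          \<le> exp (- (t - \<tau>) * \<kappa>) * (12 * norm (g \<tau> \<xi>))"
        using assms by (intro mult_mono norm_leray_le) (auto simp: mult_left_mono_neg)
      then show ?thesis using True by (simp add: f_def decay_kernel_def mult_ac)
    qed (simp add: f_def decay_kernel_def)
  qed
  finally show ?thesis .
qed

lemma borel_measurable_phi_j[measurable]:
  assumes "admissible_cutoff chi"
  shows "phi_j chi j \<in> borel_measurable borel"
proof -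
  have cont: "continuous_on UNIV chi"
    using assms unfolding admissible_cutoff_def smooth_def by (metis Ck.simps(1))
  have "continuous_on UNIV (phi_j chi j)"
    unfolding phi_j_def[abs_def] by (intro continuous_intros continuous_on_compose2[OF cont]) auto
  then show ?thesis by (rule borel_measurable_continuous_onI)
qed

lemma phi_j_eq_0_if_norm_le:
  assumes "admissible_cutoff chi" and "norm \<xi> \<le> 3 / 4 * 2 powr real_of_int j"
  shows "phi_j chi j \<xi> = 0"
proof -
  have one: "chi \<eta> = 1" if "norm \<eta> \<le> 3 / 4" for \<eta>
    using assms(1) that unfolding admissible_cutoff_def by blast
  have "norm ((2 powr (- real_of_int j)) *\<^sub>R \<xi>) \<le> 2 powr (- real_of_int j) * (3 / 4 * 2 powr real_of_int j)"
    using assms(2) by (simp add: mult_left_mono)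
  also have "\<dots> = 3 / 4" by (simp add: powr_minus field_simps)
  finally have "norm ((2 powr (- real_of_int j)) *\<^sub>R \<xi>) \<le> 3 / 4" .
  moreover have "norm ((2 powr (- real_of_int j) / 2) *\<^sub>R \<xi>) \<le> norm ((2 powr (- real_of_int j)) *\<^sub>R \<xi>)"
    by simp
  ultimately have "norm ((2 powr (- real_of_int j) / 2) *\<^sub>R \<xi>) \<le> 3 / 4"
    "norm ((2 powr (- real_of_int j)) *\<^sub>R \<xi>) \<le> 3 / 4"
    by linarith+
  then show ?thesis unfolding phi_j_def by (simp add: one)
qed

definition block_decay_rate :: "int \<Rightarrow> real" where
  "block_decay_rate j = (3 / 4 * 2 powr real_of_int j)\<^sup>2"

lemma block_decay_rate_pos: "block_decay_rate j > 0"
  by (simp add: block_decay_rate_def)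

lemma block_decay_rate_le_if_phi_j_nonzero:
  assumes "admissible_cutoff chi" and "phi_j chi j \<xi> \<noteq> 0"
  shows "block_decay_rate j \<le> (norm \<xi>)\<^sup>2"
proof -
  have "3 / 4 * 2 powr real_of_int j \<le> norm \<xi>"
    using phi_j_eq_0_if_norm_le[OF assms(1)] assms(2) by force
  then show ?thesis unfolding block_decay_rate_def by (intro power_mono) auto
qed

lemma norm_block_duhamel_hat_le:
  fixes g :: "real \<Rightarrow> real^3 \<Rightarrow> complex^3"
  assumes chi: "admissible_cutoff chi" and [measurable]: "(\<lambda>\<tau>. g \<tau> \<xi>) \<in> borel_measurable lborel"
    and W0: "w \<ge> 0"
  shows "ennreal (w * norm (phi_j chi j \<xi> *\<^sub>R duhamel_hat g t \<xi>))
    \<le> (\<integral>\<^sup>+ \<tau>. ennreal (12 * decay_kernel (block_decay_rate j) t \<tau> * (w * norm (phi_j chi j \<xi> *\<^sub>R g \<tau> \<xi>))) \<partial>lborel)"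
proof (cases "phi_j chi j \<xi> = 0")
  case False
  have "ennreal (w * norm (phi_j chi j \<xi> *\<^sub>R duhamel_hat g t \<xi>))
      = ennreal (w * \<bar>phi_j chi j \<xi>\<bar>) * ennreal (norm (duhamel_hat g t \<xi>))"
    using W0 by (simp add: ennreal_mult mult_ac)
  also have "\<dots> \<le> ennreal (w * \<bar>phi_j chi j \<xi>\<bar>) *
      (\<integral>\<^sup>+ \<tau>. ennreal (12 * decay_kernel (block_decay_rate j) t \<tau> * norm (g \<tau> \<xi>)) \<partial>lborel)"
    by (intro mult_left_mono norm_duhamel_hat_le block_decay_rate_le_if_phi_j_nonzero[OF chi False]) simp
  also have "\<dots> = (\<integral>\<^sup>+ \<tau>. ennreal (w * \<bar>phi_j chi j \<xi>\<bar>) *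
      ennreal (12 * decay_kernel (block_decay_rate j) t \<tau> * norm (g \<tau> \<xi>)) \<partial>lborel)"
    by (simp add: nn_integral_cmult)
  also have "\<dots> = (\<integral>\<^sup>+ \<tau>. ennreal (12 * decay_kernel (block_decay_rate j) t \<tau> *
      (w * norm (phi_j chi j \<xi> *\<^sub>R g \<tau> \<xi>))) \<partial>lborel)"
    using W0 by (intro nn_integral_cong) (simp add: ennreal_mult[symmetric] decay_kernel_nonneg mult_ac)
  finally show ?thesis .
qed simp

lemma luxemburg_norm_block_duhamel_le:
  fixes g :: "real \<Rightarrow> real^3 \<Rightarrow> complex^3" and P W :: "real^3 \<Rightarrow> real"
  assumes chi: "admissible_cutoff chi"
    and gm[measurable]: "(\<lambda>z. g (fst z) (snd z)) \<in> borel_measurable (lborel \<Otimes>\<^sub>M lborel)"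
    and P1: "\<And>\<xi>. P \<xi> \<ge> 1" and [measurable]: "P \<in> borel_measurable lborel"
    and W0: "\<And>\<xi>. W \<xi> \<ge> 0" and [measurable]: "W \<in> borel_measurable lborel"
  shows "luxemburg_norm lborel P (\<lambda>\<xi>. W \<xi> * norm (phi_j chi j \<xi> *\<^sub>R duhamel_hat g t \<xi>))
    \<le> (\<integral>\<^sup>+ \<tau>. ennreal (12 * decay_kernel (block_decay_rate j) t \<tau>) *
          luxemburg_norm lborel P (\<lambda>\<xi>. W \<xi> * norm (phi_j chi j \<xi> *\<^sub>R g \<tau> \<xi>)) \<partial>lborel)"
proof -
  have [measurable]: "phi_j chi j \<in> borel_measurable lborel"
    using borel_measurable_phi_j[OF chi] by simp
  define K where "K \<tau> = 12 * decay_kernel (block_decay_rate j) t \<tau>" for \<tau>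
  have K0: "K \<tau> \<ge> 0" for \<tau> by (simp add: K_def decay_kernel_nonneg)
  have "luxemburg_norm lborel P (\<lambda>\<xi>. W \<xi> * norm (phi_j chi j \<xi> *\<^sub>R duhamel_hat g t \<xi>))
      \<le> (\<integral>\<^sup>+ \<tau>. luxemburg_norm lborel P (\<lambda>\<xi>. K \<tau> * (W \<xi> * norm (phi_j chi j \<xi> *\<^sub>R g \<tau> \<xi>))) \<partial>lborel)"
  proof (rule minkowski_integral_luxemburg_norm[OF lborel.sigma_finite_measure_axioms P1])
    show "(\<lambda>z. K (fst z) * (W (snd z) * norm (phi_j chi j (snd z) *\<^sub>R g (fst z) (snd z))))
        \<in> borel_measurable (lborel \<Otimes>\<^sub>M lborel)"
      unfolding K_def by measurable
    show "K \<tau> * (W \<xi> * norm (phi_j chi j \<xi> *\<^sub>R g \<tau> \<xi>)) \<ge> 0" for \<tau> \<xi>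
      using K0 W0 by simp
    fix \<xi>
    have "(\<lambda>\<tau>. g \<tau> \<xi>) \<in> borel_measurable lborel"
      using measurable_Pair1[OF gm, of \<xi>] by simp
    then show "ennreal \<bar>W \<xi> * norm (phi_j chi j \<xi> *\<^sub>R duhamel_hat g t \<xi>)\<bar>
        \<le> (\<integral>\<^sup>+ \<tau>. ennreal (K \<tau> * (W \<xi> * norm (phi_j chi j \<xi> *\<^sub>R g \<tau> \<xi>))) \<partial>lborel)"
      using norm_block_duhamel_hat_le[OF chi _ W0[of \<xi>]] W0[of \<xi>] by (simp add: K_def)
  qed measurable
  also have "\<dots> = (\<integral>\<^sup>+ \<tau>. ennreal (K \<tau>) *
      luxemburg_norm lborel P (\<lambda>\<xi>. W \<xi> * norm (phi_j chi j \<xi> *\<^sub>R g \<tau> \<xi>)) \<partial>lborel)"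
    using P1 K0 by (intro nn_integral_cong luxemburg_norm_cmult) (auto intro: order.trans[OF zero_le_one])
  finally show ?thesis unfolding K_def .
qed

lemma block_time_gain_le:
  assumes r: "r \<ge> 1"
  shows "2 powr (real_of_int j * 2 * (1 / r)) * (1 / (block_decay_rate j * r)) powr (1 / r) \<le> 16 / 9"
proof -
  have "block_decay_rate j * r = 9 * r / 16 * 2 powr (2 * real_of_int j)"
    unfolding block_decay_rate_def by (simp add: power2_eq_square powr_add[symmetric])
  then have "1 / (block_decay_rate j * r) = 16 / (9 * r) * 2 powr (- (2 * real_of_int j))"
    using r block_decay_rate_pos[of j] by (simp add: powr_minus divide_simps)
  then have "(1 / (block_decay_rate j * r)) powr (1 / r)
      = (16 / (9 * r) * 2 powr (- (2 * real_of_int j))) powr (1 / r)"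
    by (simp only:)
  also have "\<dots> = (16 / (9 * r)) powr (1 / r) * (2 powr (- (2 * real_of_int j))) powr (1 / r)"
    by (rule powr_mult)
  also have "(2 powr (- (2 * real_of_int j))) powr (1 / r) = 2 powr (- (2 * real_of_int j) * (1 / r))"
    by (rule powr_powr)
  finally have "2 powr (real_of_int j * 2 * (1 / r)) * (1 / (block_decay_rate j * r)) powr (1 / r)
      = (16 / (9 * r)) powr (1 / r)"
    by (simp add: powr_add[symmetric] mult_ac)
  also have "\<dots> \<le> (16 / 9) powr (1 / r)"
    using r by (intro powr_mono2) (auto simp: field_simps)
  also have "\<dots> \<le> (16 / 9) powr 1"
    using r by (intro powr_mono) auto
  finally show ?thesis by simp
qed

lemma Lt_norm_block_decay_convolution_le:
  fixes N a :: "real \<Rightarrow> ennreal" and \<rho> :: ennreal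
  assumes \<rho>: "1 \<le> \<rho>" and Nm: "N \<in> borel_measurable lborel" and am: "a \<in> borel_measurable lborel"
    and bound: "\<And>t. N t \<le> (\<integral>\<^sup>+ \<tau>. ennreal (12 * 2 powr (real_of_int j * 2 * inv_exp \<rho>) *
      decay_kernel (block_decay_rate j) t \<tau>) * a \<tau> \<partial>lborel)"
  shows "Lt_norm \<rho> N \<le> ennreal 22 * Lt_norm 1 a"
proof (cases "\<rho> = \<top>")
  case True
  have "Lt_norm \<top> N \<le> ennreal 12 * Lt_norm 1 a"
    using bound block_decay_rate_pos[of j]
    by (intro Lt_norm_top_decay_convolution_le[where \<kappa> = "block_decay_rate j", OF _ _ Nm am])
      (auto simp: True inv_exp_def)
  then have "Lt_norm \<rho> N \<le> ennreal 12 * Lt_norm 1 a"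
    using True by simp
  also have "\<dots> \<le> ennreal 22 * Lt_norm 1 a"
    by (intro mult_right_mono) auto
  finally show ?thesis .
next
  case False
  with \<rho> obtain r where r: "\<rho> = ennreal r" "r \<ge> 1"
    by (cases \<rho> rule: ennreal_cases) (auto simp flip: ennreal_1)
  then have inv: "inv_exp \<rho> = 1 / r" by (simp add: inv_exp_def)
  define c where "c = 2 powr (real_of_int j * 2 * (1 / r))"
  have "Lt_norm \<rho> N \<le> ennreal (12 * c * (1 / (block_decay_rate j * r)) powr (1 / r)) * Lt_norm 1 a"
    unfolding r(1) using bound r(2) am
    by (intro Lt_norm_decay_convolution_le) (auto simp: block_decay_rate_pos c_def inv)
  also have "\<dots> \<le> ennreal 22 * Lt_norm 1 a"
  proof (intro mult_right_mono ennreal_leI)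
    have "c * (1 / (block_decay_rate j * r)) powr (1 / r) \<le> 16 / 9"
      using block_time_gain_le[OF r(2), of j] by (simp add: c_def)
    then show "12 * c * (1 / (block_decay_rate j * r)) powr (1 / r) \<le> 22"
      by (simp add: mult.assoc)
  qed simp
  finally show ?thesis .
qed

lemma Lt_norm_block_duhamel_le:
  fixes g :: "real \<Rightarrow> real^3 \<Rightarrow> complex^3" and P W :: "real^3 \<Rightarrow> real" and \<rho> :: ennreal
  assumes chi: "admissible_cutoff chi"
    and gm[measurable]: "(\<lambda>z. g (fst z) (snd z)) \<in> borel_measurable (lborel \<Otimes>\<^sub>M lborel)"
    and P1: "\<And>\<xi>. P \<xi> \<ge> 1" and [measurable]: "P \<in> borel_measurable lborel"
    and W0: "\<And>\<xi>. W \<xi> \<ge> 0" and [measurable]: "W \<in> borel_measurable lborel"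
    and \<rho>: "1 \<le> \<rho>"
  shows "Lt_norm \<rho> (\<lambda>t. luxemburg_norm lborel P
      (\<lambda>\<xi>. 2 powr (real_of_int j * 2 * inv_exp \<rho>) * W \<xi> * norm (phi_j chi j \<xi> *\<^sub>R duhamel_hat g t \<xi>)))
    \<le> ennreal 22 * Lt_norm 1 (\<lambda>\<tau>. luxemburg_norm lborel P (\<lambda>\<xi>. W \<xi> * norm (phi_j chi j \<xi> *\<^sub>R g \<tau> \<xi>)))"
proof (rule Lt_norm_block_decay_convolution_le[OF \<rho>])
  have P0: "\<And>\<xi>. P \<xi> \<ge> 0" using P1 by (meson order.trans zero_le_one)
  have [measurable]: "phi_j chi j \<in> borel_measurable lborel"
    using borel_measurable_phi_j[OF chi] by simp
  have [measurable]: "(\<lambda>z. duhamel_hat g (fst z) (snd z)) \<in> borel_measurable (lborel \<Otimes>\<^sub>M lborel)"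
    by (rule borel_measurable_duhamel_hat[OF gm])
  define s0 where "s0 = 2 powr (real_of_int j * 2 * inv_exp \<rho>)"
  define a where "a \<tau> = luxemburg_norm lborel P (\<lambda>\<xi>. W \<xi> * norm (phi_j chi j \<xi> *\<^sub>R g \<tau> \<xi>))" for \<tau>
  show "(\<lambda>t. luxemburg_norm lborel P (\<lambda>\<xi>. s0 * W \<xi> * norm (phi_j chi j \<xi> *\<^sub>R duhamel_hat g t \<xi>)))
      \<in> borel_measurable lborel" and am[measurable]: "a \<in> borel_measurable lborel"
    unfolding a_def by (rule measurable_luxemburg_norm[OF lborel.sigma_finite_measure_axioms P0], measurable)+
  fix t
  have "luxemburg_norm lborel P (\<lambda>\<xi>. s0 * W \<xi> * norm (phi_j chi j \<xi> *\<^sub>R duhamel_hat g t \<xi>))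
      = ennreal s0 * luxemburg_norm lborel P (\<lambda>\<xi>. W \<xi> * norm (phi_j chi j \<xi> *\<^sub>R duhamel_hat g t \<xi>))"
    using P0 by (simp add: s0_def mult.assoc luxemburg_norm_cmult)
  also have "\<dots> \<le> ennreal s0 * (\<integral>\<^sup>+ \<tau>. ennreal (12 * decay_kernel (block_decay_rate j) t \<tau>) * a \<tau> \<partial>lborel)"
    unfolding a_def by (intro mult_left_mono luxemburg_norm_block_duhamel_le[OF chi gm P1 _ W0]) auto
  also have "\<dots> = (\<integral>\<^sup>+ \<tau>. ennreal s0 * (ennreal (12 * decay_kernel (block_decay_rate j) t \<tau>) * a \<tau>) \<partial>lborel)"
    by (simp add: nn_integral_cmult)
  also have "\<dots> = (\<integral>\<^sup>+ \<tau>. ennreal (12 * s0 * decay_kernel (block_decay_rate j) t \<tau>) * a \<tau> \<partial>lborel)"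
    by (intro nn_integral_cong) (simp add: s0_def ennreal_mult decay_kernel_nonneg mult.assoc mult.left_commute)
  finally show "luxemburg_norm lborel P (\<lambda>\<xi>. s0 * W \<xi> * norm (phi_j chi j \<xi> *\<^sub>R duhamel_hat g t \<xi>))
      \<le> (\<integral>\<^sup>+ \<tau>. ennreal (12 * s0 * decay_kernel (block_decay_rate j) t \<tau>) * a \<tau> \<partial>lborel)" .
qed

section \<open>Summation over the dyadic blocks\<close>

lemma zsum_mono_cmult:
  assumes "\<And>j. f j \<le> c * h j"
  shows "zsum f \<le> c * zsum h"
proof -
  have "zsum f \<le> (SUP n::nat. c * (\<Sum>j\<in>{- int n..int n}. h j))"
    unfolding zsum_def by (intro SUP_mono) (auto intro!: sum_mono assms simp: sum_distrib_left)
  also have "\<dots> = c * zsum h"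
    unfolding zsum_def by (rule SUP_mult_left_ennreal[symmetric])
  finally show ?thesis .
qed

lemma Lp_norm_eq_luxemburg_norm:
  "q > 0 \<Longrightarrow> F \<in> borel_measurable lborel \<Longrightarrow> Lp_norm q F = luxemburg_norm lborel (\<lambda>_. q) F"
  unfolding Lp_norm_def by (simp add: luxemburg_norm_const_exponent)

lemma CL_var_norm_duhamel_hat_le:
  fixes g :: "real \<Rightarrow> real^3 \<Rightarrow> complex^3" and \<rho> :: ennreal
  assumes chi: "admissible_cutoff chi"
    and gm: "(\<lambda>z. g (fst z) (snd z)) \<in> borel_measurable (lborel \<Otimes>\<^sub>M lborel)"
    and p1: "\<And>\<xi>. p \<xi> \<ge> 1" and pm: "p \<in> borel_measurable lborel"
    and [measurable]: "s \<in> borel_measurable lborel" and \<rho>: "1 \<le> \<rho>"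
  shows "CL_var_norm chi \<rho> (\<lambda>\<xi>. s \<xi> + 2 * inv_exp \<rho>) p (duhamel_hat g)
    \<le> ennreal 22 * CL_var_norm chi 1 s p g"
  unfolding CL_var_norm_def Lvar_norm_eq_luxemburg_norm
proof (rule zsum_mono_cmult)
  fix j
  have "2 powr (real_of_int j * (s \<xi> + 2 * inv_exp \<rho>))
      = 2 powr (real_of_int j * 2 * inv_exp \<rho>) * 2 powr (real_of_int j * s \<xi>)" for \<xi>
    by (simp add: powr_add[symmetric] algebra_simps)
  then show "Lt_norm \<rho> (\<lambda>t. luxemburg_norm lborel p (\<lambda>\<xi>. 2 powr (real_of_int j * (s \<xi> + 2 * inv_exp \<rho>)) *
        norm (phi_j chi j \<xi> *\<^sub>R duhamel_hat g t \<xi>)))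
    \<le> ennreal 22 * Lt_norm 1 (\<lambda>t. luxemburg_norm lborel p (\<lambda>\<xi>. 2 powr (real_of_int j * s \<xi>) *
        norm (phi_j chi j \<xi> *\<^sub>R g t \<xi>)))"
    by (simp only:) (rule Lt_norm_block_duhamel_le[OF chi gm p1 pm _ _ \<rho>]; simp)
qed

lemma CL_norm_duhamel_hat_le:
  fixes g :: "real \<Rightarrow> real^3 \<Rightarrow> complex^3" and \<rho> :: ennreal
  assumes chi: "admissible_cutoff chi"
    and gm[measurable]: "(\<lambda>z. g (fst z) (snd z)) \<in> borel_measurable (lborel \<Otimes>\<^sub>M lborel)"
    and q: "q \<ge> 1" and \<rho>: "1 \<le> \<rho>"
  shows "CL_norm chi \<rho> (s + 2 * inv_exp \<rho>) q (duhamel_hat g) \<le> ennreal 22 * CL_norm chi 1 s q g"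
  unfolding CL_norm_def
proof (rule zsum_mono_cmult)
  fix j
  have [measurable]: "phi_j chi j \<in> borel_measurable lborel"
    using borel_measurable_phi_j[OF chi] by simp
  have [measurable]: "(\<lambda>z. duhamel_hat g (fst z) (snd z)) \<in> borel_measurable (lborel \<Otimes>\<^sub>M lborel)"
    by (rule borel_measurable_duhamel_hat[OF gm])
  define c where "c = 2 powr (real_of_int j * 2 * inv_exp \<rho>)"
  define F where "F t \<xi> = norm (phi_j chi j \<xi> *\<^sub>R duhamel_hat g t \<xi>)" for t \<xi>
  define G where "G t \<xi> = norm (phi_j chi j \<xi> *\<^sub>R g t \<xi>)" for t \<xi>
  have Fm[measurable]: "(\<lambda>z. F (fst z) (snd z)) \<in> borel_measurable (lborel \<Otimes>\<^sub>M lborel)"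
    and Gm[measurable]: "(\<lambda>z. G (fst z) (snd z)) \<in> borel_measurable (lborel \<Otimes>\<^sub>M lborel)"
    unfolding F_def G_def by measurable
  have Lp_F: "Lp_norm q (F t) = luxemburg_norm lborel (\<lambda>_. q) (F t)"
    and Lp_G: "Lp_norm q (G t) = luxemburg_norm lborel (\<lambda>_. q) (G t)" for t
    using q measurable_Pair2[OF Fm, of t] measurable_Pair2[OF Gm, of t]
    by (simp_all add: Lp_norm_eq_luxemburg_norm)
  have "(\<lambda>t. Lp_norm q (F t)) \<in> borel_measurable lborel"
    unfolding Lp_F using q by (intro measurable_luxemburg_norm[OF lborel.sigma_finite_measure_axioms]) auto
  then have "ennreal c * Lt_norm \<rho> (\<lambda>t. Lp_norm q (F t))
      = Lt_norm \<rho> (\<lambda>t. luxemburg_norm lborel (\<lambda>_. q) (\<lambda>\<xi>. c * F t \<xi>))"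
    using q \<rho> by (simp add: c_def Lt_norm_cmult[symmetric] Lp_F luxemburg_norm_cmult)
  also have "\<dots> \<le> ennreal 22 * Lt_norm 1 (\<lambda>t. luxemburg_norm lborel (\<lambda>_. q) (G t))"
    using Lt_norm_block_duhamel_le[OF chi gm, of "\<lambda>_. q" "\<lambda>_. 1" \<rho> j] q \<rho>
    by (simp add: F_def[abs_def] G_def[abs_def] c_def)
  also have "\<dots> = ennreal 22 * Lt_norm 1 (\<lambda>t. Lp_norm q (G t))"
    by (simp add: Lp_G)
  finally have block: "ennreal c * Lt_norm \<rho> (\<lambda>t. Lp_norm q (F t)) \<le> ennreal 22 * Lt_norm 1 (\<lambda>t. Lp_norm q (G t))" .
  have "ennreal (2 powr (real_of_int j * (s + 2 * inv_exp \<rho>))) = ennreal (2 powr (real_of_int j * s)) * ennreal c"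
    by (simp add: c_def powr_add[symmetric] algebra_simps flip: ennreal_mult)
  then have "ennreal (2 powr (real_of_int j * (s + 2 * inv_exp \<rho>))) * Lt_norm \<rho> (\<lambda>t. Lp_norm q (F t))
      \<le> ennreal 22 * (ennreal (2 powr (real_of_int j * s)) * Lt_norm 1 (\<lambda>t. Lp_norm q (G t)))"
    using mult_left_mono[OF block, of "ennreal (2 powr (real_of_int j * s))"] by (simp add: mult_ac)
  then show "ennreal (2 powr (real_of_int j * (s + 2 * inv_exp \<rho>))) *
        Lt_norm \<rho> (\<lambda>t. Lp_norm q (\<lambda>\<xi>. norm (phi_j chi j \<xi> *\<^sub>R duhamel_hat g t \<xi>)))
      \<le> ennreal 22 * (ennreal (2 powr (real_of_int j * s)) *
        Lt_norm 1 (\<lambda>t. Lp_norm q (\<lambda>\<xi>. norm (phi_j chi j \<xi> *\<^sub>R g t \<xi>))))"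
    unfolding F_def[abs_def] G_def[abs_def] .
qed

theorem lemma4p2:
  fixes chi :: "real^3 \<Rightarrow> real" and p :: "real^3 \<Rightarrow> real" and \<rho> :: ennreal
  assumes "admissible_cutoff chi"
    and "p \<in> P0_log"
    and "2 \<le> ess_inf_r p" and "ess_sup_r p \<le> 6"
    and "1 \<le> \<rho>"
  shows "\<exists>C::real. C > 0 \<and>
    (\<forall>g :: real \<Rightarrow> real^3 \<Rightarrow> complex^3.
       (\<lambda>(t, \<xi>). g t \<xi>) \<in> borel_measurable (lborel \<Otimes>\<^sub>M lborel) \<longrightarrow>
       CL_var_norm chi 1 (\<lambda>\<xi>. 2 - 3 / p \<xi>) p g < \<top> \<longrightarrow>
       CL_norm chi 1 (1/2) 2 g < \<top> \<longrightarrow>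
       X_norm chi p \<rho> (duhamel_hat g)
         \<le> ennreal C * (CL_var_norm chi 1 (\<lambda>\<xi>. 2 - 3 / p \<xi>) p g + CL_norm chi 1 (1/2) 2 g))"
proof (intro exI[of _ 22] conjI allI impI)
  \<comment> \<open>Only \<open>p \<ge> 1\<close> and the measurability of \<open>p\<close> are used: the estimate holds for every such
    exponent, without the bounds \<open>2 \<le> p \<le> 6\<close>, the log-Hoelder condition or finiteness of the right-hand side.\<close>
  fix g :: "real \<Rightarrow> real^3 \<Rightarrow> complex^3"
  assume "(\<lambda>(t, \<xi>). g t \<xi>) \<in> borel_measurable (lborel \<Otimes>\<^sub>M lborel)"
  then have gm: "(\<lambda>z. g (fst z) (snd z)) \<in> borel_measurable (lborel \<Otimes>\<^sub>M lborel)"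
    by (simp add: split_beta')
  have p1: "\<And>\<xi>. 1 \<le> p \<xi>" and pm[measurable]: "p \<in> borel_measurable lborel"
    using assms(2) unfolding P0_log_def P0_def by auto
  define V where "V = CL_var_norm chi 1 (\<lambda>\<xi>. 2 - 3 / p \<xi>) p g"
  define L where "L = CL_norm chi 1 (1/2) 2 g"
  have "CL_var_norm chi \<rho> (\<lambda>\<xi>. 2 - 3 / p \<xi> + 2 * inv_exp \<rho>) p (duhamel_hat g) \<le> ennreal 22 * V"
    unfolding V_def by (intro CL_var_norm_duhamel_hat_le[OF assms(1) gm p1 pm _ assms(5)]) measurable
  moreover have "CL_norm chi 1 (5/2) 2 (duhamel_hat g) \<le> ennreal 22 * L"
    using CL_norm_duhamel_hat_le[OF assms(1) gm, of 2 1 "1/2"] by (simp add: L_def inv_exp_def)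
  moreover have "CL_norm chi \<top> (1/2) 2 (duhamel_hat g) \<le> ennreal 22 * L"
    using CL_norm_duhamel_hat_le[OF assms(1) gm, of 2 \<top> "1/2"] by (simp add: L_def inv_exp_def)
  moreover have "ennreal 22 * V \<le> ennreal 22 * (V + L)" "ennreal 22 * L \<le> ennreal 22 * (V + L)"
    by (simp_all add: mult_left_mono)
  ultimately show "X_norm chi p \<rho> (duhamel_hat g) \<le> ennreal 22 * (V + L)"
    unfolding X_norm_def by (auto intro: order.trans)
qed simp

end
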